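(* (i) Let $0\le B<A\le 1$. Then $R_{\mathcal{S}^*_{Ne}}(\mathcal{S}^*[A,B])=\min\{1,\,2/(3A-B)\}$. In particular, if $1-B\le 3(1-A)$, then $\mathcal{S}^*[A,B]\subset\mathcal{S}^*_{Ne}$. (ii) Let $-1\le B<A\le 1$ with $B\le 0$. Then $R_{\mathcal{S}^*_{Ne}}(\mathcal{S}^*[A,B])=\min\{1,\,2/(3A-5B)\}$. In particular, if $3(1+A)\le 5(1+B)$, then $\mathcal{S}^*[A,B]\subset\mathcal{S}^*_{Ne}$.
   Context: $\mathbb{D}=\{|z|<1\}$, $\mathbb{D}_r=\{|z|<r\}$. $\mathcal{A}$ is the class of analytic $f$ on $\mathbb{D}$ with $f(0)=0$, $f'(0)=1$; for $f\in\mathcal{A}$ let $\mathcal{Q}_f(z)=zf'(z)/f(z)$. For analytic $F,G$ on $\mathbb{D}$, $F\prec G$ means $F=G\circ w$ for some analytic $w:\mathbb{D}\to\mathbb{D}$ with $w(0)=0$. For analytic $\varphi$ on $\mathbb{D}$, $\mathcal{S}^*(\varphi)=\{f\in\mathcal{A}:\mathcal{Q}_f\prec\varphi\}$. Let $\varphi_{Ne}(z)=1+z-z^3/3$ (univalent on $\mathbb{D}$), $\Omega_{Ne}=\varphi_{Ne}(\mathbb{D})$, and $\mathcal{S}^*_{Ne}=\mathcal{S}^*(\varphi_{Ne})$. For $\mathcal{G}\subset\mathcal{A}$, the $\mathcal{S}^*_{Ne}$-radius $R_{\mathcal{S}^*_{Ne}}(\mathcal{G})$ is the largest $\rho\in(0,1]$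 such that for every $f\in\mathcal{G}$ and every $0<r\le\rho$ the function $r^{-1}f(rz)$ belongs to $\mathcal{S}^*_{Ne}$; equivalently, the largest $\rho\in(0,1]$ with $\mathcal{Q}_f(\mathbb{D}_\rho)\subseteq\Omega_{Ne}$ for all $f\in\mathcal{G}$. For $-1\le B<A\le1$, the Janowski class is $\mathcal{S}^*[A,B]=\mathcal{S}^*\big(\frac{1+Az}{1+Bz}\big)$. *)

theory Defs
  imports "HOL-Analysis.Analysis"
begin

definition classA :: "(complex \<Rightarrow> complex) set" where
  "classA = {f. f holomorphic_on ball 0 1 \<and> f 0 = 0 \<and> deriv f 0 = 1}"

text \<open>Q_f(z) = z f'(z)/f(z); at z = 0 the removable value 1 (= lim, since f(0)=0, f'(0)=1).\<close>
definition Qf :: "(complex \<Rightarrow> complex) \<Rightarrow> complex \<Rightarrow> complex" where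
  "Qf f z = (if z = 0 then 1 else z * deriv f z / f z)"

definition subord :: "(complex \<Rightarrow> complex) \<Rightarrow> (complex \<Rightarrow> complex) \<Rightarrow> bool" where
  "subord F G \<longleftrightarrow> F holomorphic_on ball 0 1 \<and> G holomorphic_on ball 0 1 \<and>
     (\<exists>w. w holomorphic_on ball 0 1 \<and> w ` ball 0 1 \<subseteq> ball 0 1 \<and> w 0 = 0 \<and>
          (\<forall>z\<in>ball 0 1. F z = G (w z)))"

definition Sstar :: "(complex \<Rightarrow> complex) \<Rightarrow> (complex \<Rightarrow> complex) set" where
  "Sstar \<phi> = {f \<in> classA. subord (Qf f) \<phi>}"

definition phiNe :: "complex \<Rightarrow> complex" where
  "phiNe z = 1 + z - z ^ 3 / 3"

definition SNe :: "(complex \<Rightarrow> complex) set" where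
  "SNe = Sstar phiNe"

definition Janowski :: "real \<Rightarrow> real \<Rightarrow> (complex \<Rightarrow> complex) set" where
  "Janowski A B = Sstar (\<lambda>z. (1 + of_real A * z) / (1 + of_real B * z))"

definition dilate :: "(complex \<Rightarrow> complex) \<Rightarrow> real \<Rightarrow> complex \<Rightarrow> complex" where
  "dilate f r = (\<lambda>z. f (of_real r * z) / of_real r)"

definition SNe_radius :: "(complex \<Rightarrow> complex) set \<Rightarrow> real" where
  "SNe_radius G = (GREATEST \<rho>. 0 < \<rho> \<and> \<rho> \<le> 1 \<and>
       (\<forall>f\<in>G. \<forall>r. 0 < r \<and> r \<le> \<rho> \<longrightarrow> dilate f r \<in> SNe))"

end

theory Submission
  imports Defs "HOL-Complex_Analysis.Complex_Analysis"
begin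

text \<open>
  If \<open>Q\<^sub>f\<close> is subordinate to \<open>(1 + A z)/(1 + B z)\<close>, Schwarz's lemma confines the values
  of \<open>Q\<^sub>f\<close> on \<open>|z| < r\<close> to the image of that disc under this Moebius map, which is the
  disc with real centre \<open>c = (1 - A B r\<^sup>2)/(1 - B\<^sup>2 r\<^sup>2)\<close> and radius
  \<open>R = (A - B) r/(1 - B\<^sup>2 r\<^sup>2)\<close>. The boundary curve \<open>phiNe (sphere 0 1)\<close> keeps distance at
  least \<open>2/3 - \<bar>c - 1\<bar>\<close> from every real \<open>c\<close>, so by connectedness the disc lies in
  \<open>phiNe (ball 0 1)\<close> as soon as \<open>R \<le> 2/3 - \<bar>c - 1\<bar>\<close>, which simplifies to
  \<open>r (3 (A - B) + 2 \<bar>B\<bar>) \<le> 2\<close>. This is sharp: the real values of \<open>phiNe\<close> on the disc fill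
  \<open>(1/3, 5/3)\<close>, while the extremal function with \<open>Q\<^sub>f = (1 + A z)/(1 + B z)\<close> takes the value
  \<open>1/3\<close> (if \<open>B \<ge> 0\<close>) or \<open>5/3\<close> (if \<open>B \<le> 0\<close>) at a real point of modulus
  \<open>2/(3 (A - B) + 2 \<bar>B\<bar>)\<close>.
\<close>

section \<open>The map \<open>phiNe\<close>\<close>

lemma phiNe_Complex:
  "phiNe (Complex x y) = Complex (1 + x - (x^3 - 3*x*y^2)/3) (y - (3*x^2*y - y^3)/3)"
  by (simp add: phiNe_def complex_eq_iff power3_eq_cube power2_eq_square algebra_simps)

lemma phiNe_0 [simp]: "phiNe 0 = 1"
  by (simp add: phiNe_def)

lemma holomorphic_on_phiNe [holomorphic_intros]: "phiNe holomorphic_on S"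
  unfolding phiNe_def by (intro holomorphic_intros) auto

lemma continuous_on_phiNe: "continuous_on S phiNe"
  unfolding phiNe_def by (intro continuous_intros) auto

lemma real_phiNe_bounds:
  assumes "norm z < 1" "Im (phiNe z) = 0"
  shows "1/3 < Re (phiNe z) \<and> Re (phiNe z) < 5/3"
proof -
  obtain x y where z: "z = Complex x y" by (metis complex.exhaust)
  have n: "x^2 + y^2 < 1" using assms(1) z by (simp add: norm_complex_def)
  have "y * (1 - x^2 + y^2/3) = 0"
    using assms(2) unfolding z phiNe_Complex by (simp add: algebra_simps power2_eq_square power3_eq_cube)
  moreover have "1 - x^2 + y^2/3 > 0" using n zero_le_power2[of y] by linarith
  ultimately have y: "y = 0" by simp
  have x: "-1 < x" "x < 1" using n y abs_square_less_1[of x] by auto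
  have "Re (phiNe z) = 1 + x - x^3/3" unfolding z phiNe_Complex y by simp
  moreover have "(x+1)^2*(2-x) > 0" "(1-x)^2*(x+2) > 0" using x by (auto intro!: mult_pos_pos)
  ultimately show ?thesis by (simp add: power2_eq_square power3_eq_cube algebra_simps)
qed

text \<open>On the unit circle \<open>phiNe (Complex x y) = Complex (1 + 2x - 4x\<^sup>3/3) (4y\<^sup>3/3)\<close>; this is the squared
  distance estimate from \<open>1 + d\<close> to that point.\<close>
lemma phiNe_circle_sq_dist_ge:
  fixes x y d :: real
  assumes "x^2 + y^2 = 1" "0 \<le> d" "d \<le> 2/3"
  shows "(2/3 - d)^2 \<le> (2*x - 4*x^3/3 - d)^2 + (4*y^3/3)^2"
proof -
  have y2: "y^2 = 1 - x^2" using assms(1) by simp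
  have "(4*y^3/3)^2 = 16/9 * (y^2)^3" by (simp add: power2_eq_square power3_eq_cube)
  also have "\<dots> = 16/9 * (1-x^2)^3" unfolding y2 ..
  finally have y6: "(4*y^3/3)^2 = 16/9 * (1-x^2)^3" .
  have x: "-1 \<le> x" "x \<le> 1" using assms(1) abs_square_le_1[of x] zero_le_power2[of y] by auto
  have "(2*x - 4*x^3/3 - d)^2 + (4*y^3/3)^2 - (2/3 - d)^2
        = (4/3)*((1-x)*((1-3*d/2)*(1+x) + (d/2)*(1-x)*(5+4*x)))"
    unfolding y6 by (simp add: power2_eq_square power3_eq_cube field_simps)
  moreover have "0 \<le> (1-x)*((1-3*d/2)*(1+x) + (d/2)*(1-x)*(5+4*x))"
  proof -
    have "0 \<le> (1-3*d/2)*(1+x)" "0 \<le> (d/2)*(1-x)*(5+4*x)" using x assms by auto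
    then show ?thesis using x by simp
  qed
  ultimately show ?thesis by linarith
qed

lemma dist_phiNe_circle_real_ge:
  assumes "norm u = 1"
  shows "2/3 - \<bar>c - 1\<bar> \<le> norm (phiNe u - of_real c)"
proof (cases "\<bar>c - 1\<bar> \<le> 2/3")
  case False then show ?thesis by (smt (verit) norm_ge_zero)
next
  case True
  obtain x y where u: "u = Complex x y" by (metis complex.exhaust)
  have n: "x^2 + y^2 = 1" using assms u by (simp add: norm_complex_def)
  have y2: "y^2 = 1 - x^2" using n by simp
  have "y^3 = y * y^2" by (simp add: power3_eq_cube power2_eq_square)
  also have "\<dots> = y * (1 - x^2)" unfolding y2 ..
  finally have y3: "y^3 = y * (1 - x^2)" .
  have "1 + x - (x^3 - 3*x*y^2)/3 - c = 2*x - 4*x^3/3 - (c-1)"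
    unfolding y2 by (simp add: power2_eq_square power3_eq_cube field_simps)
  moreover have "y - (3*x^2*y - y^3)/3 = 4*y^3/3"
    unfolding y3 by (simp add: field_simps)
  ultimately have e: "phiNe u - of_real c = Complex (2*x - 4*x^3/3 - (c-1)) (4*y^3/3)"
    unfolding u phiNe_Complex by (simp add: complex_eq_iff)
  have sq: "(2/3 - \<bar>c-1\<bar>)^2 \<le> (2*x - 4*x^3/3 - (c-1))^2 + (4*y^3/3)^2"
  proof (cases "c \<ge> 1")
    case True then show ?thesis using phiNe_circle_sq_dist_ge[OF n, of "c-1"] \<open>\<bar>c - 1\<bar> \<le> 2/3\<close> by auto
  next
    case False
    have "(-x)^2 + (-y)^2 = 1" using n by simp
    from phiNe_circle_sq_dist_ge[OF this, of "1-c"] False \<open>\<bar>c - 1\<bar> \<le> 2/3\<close>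
    show ?thesis by (simp add: power2_eq_square power3_eq_cube algebra_simps)
  qed
  then show ?thesis unfolding e norm_complex_def by (simp add: real_le_rsqrt)
qed

lemma inj_on_phiNe: "inj_on phiNe (ball 0 1)"
proof (rule inj_onI, rule ccontr)
  fix a b :: complex assume a: "a \<in> ball 0 1" and b: "b \<in> ball 0 1"
    and eq: "phiNe a = phiNe b" and "a \<noteq> b"
  have "phiNe a - phiNe b = (a - b) * (1 - (a^2 + a*b + b^2)/3)"
    by (simp add: phiNe_def power2_eq_square power3_eq_cube field_simps)
  with eq \<open>a \<noteq> b\<close> have "a^2 + a*b + b^2 = 3" by auto
  moreover have "norm (a^2 + a*b + b^2) < 3"
  proof -
    have "norm (a^2 + a*b + b^2) \<le> norm a ^ 2 + norm a * norm b + norm b ^ 2"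
      using norm_triangle_ineq[of "a^2 + a*b" "b^2"] norm_triangle_ineq[of "a^2" "a*b"]
      by (simp add: norm_mult norm_power)
    also have "\<dots> < 3"
      using a b mult_strict_mono'[of "norm a" 1 "norm b" 1] abs_square_less_1[of "norm a"]
        abs_square_less_1[of "norm b"] by auto
    finally show ?thesis .
  qed
  ultimately show False by simp
qed

section \<open>Univalent images of the disc\<close>

lemma connected_subset_image_ball:
  fixes g :: "'a::euclidean_space \<Rightarrow> 'b::metric_space"
  assumes g: "continuous_on (cball a r) g" "open (g ` ball a r)"
    and S: "connected S" "S \<inter> g ` ball a r \<noteq> {}" "S \<inter> g ` sphere a r = {}"
  shows "S \<subseteq> g ` ball a r"
proof (rule ccontr)
  let ?T = "g ` ball a r"
  assume "\<not> S \<subseteq> ?T"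
  then obtain p where p: "p \<in> S" "p \<in> frontier ?T"
    using connected_Int_frontier[OF S(1,2)] by blast
  have "closure ?T \<subseteq> g ` cball a r"
  proof (rule closure_minimal)
    show "closed (g ` cball a r)"
      by (meson compact_cball compact_continuous_image compact_imp_closed g(1))
  qed (intro image_mono ball_subset_cball)
  moreover have "p \<in> closure ?T" "p \<notin> ?T" using p(2) g(2) by (auto simp: frontier_def interior_open)
  ultimately have "p \<in> g ` (cball a r - ball a r)" by blast
  then have "p \<in> g ` sphere a r" by (simp only: cball_diff_eq_sphere)
  with p(1) S(3) show False by blast
qed

lemma subord_if_image_subset:
  assumes "F holomorphic_on ball 0 1" "\<phi> holomorphic_on ball 0 1" "inj_on \<phi> (ball 0 1)"
    and "F ` ball 0 1 \<subseteq> \<phi> ` ball 0 1" "F 0 = \<phi> 0"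
  shows "subord F \<phi>"
proof -
  obtain h where h: "h holomorphic_on \<phi> ` ball 0 1" "\<And>z. z \<in> ball 0 1 \<Longrightarrow> h (\<phi> z) = z"
    using holomorphic_has_inverse[OF assms(2) open_ball assms(3)] by metis
  have "h \<circ> F holomorphic_on ball 0 1"
    using holomorphic_on_compose_gen[OF assms(1) h(1) assms(4)] .
  moreover have "(h \<circ> F) z \<in> ball 0 1 \<and> F z = \<phi> ((h \<circ> F) z)" if "z \<in> ball 0 1" for z
    using assms(4) that h(2) by fastforce
  moreover have "(h \<circ> F) 0 = 0" using assms(5) h(2)[of 0] by simp
  ultimately show ?thesis unfolding subord_def using assms(1,2) by blast
qed

lemma ball_subset_phiNe_image:
  assumes "\<bar>c - 1\<bar> < R" "R \<le> 2/3 - \<bar>c - 1\<bar>"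
  shows "ball (of_real c) R \<subseteq> phiNe ` ball 0 1"
proof (rule connected_subset_image_ball)
  show "open (phiNe ` ball 0 1)"
    by (rule open_mapping_thm3[OF holomorphic_on_phiNe open_ball inj_on_phiNe])
  have "dist (of_real c) (1::complex) = \<bar>c - 1\<bar>" by (metis dist_of_real dist_real_def of_real_1)
  then have "(1::complex) \<in> ball (of_real c) R" using assms(1) by simp
  moreover have "1 \<in> phiNe ` ball 0 1" by (rule image_eqI[of _ _ 0]) simp_all
  ultimately show "ball (of_real c) R \<inter> phiNe ` ball 0 1 \<noteq> {}" by blast
  show "ball (of_real c) R \<inter> phiNe ` sphere 0 1 = {}"
    using dist_phiNe_circle_real_ge[of _ c] assms(2) by (force simp: dist_norm norm_minus_commute)
qed (auto intro: continuous_on_phiNe)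

section \<open>Subordination under dilation\<close>

lemma of_real_mult_mem_ball:
  fixes z :: "'a::real_normed_algebra_1"
  shows "0 \<le> r \<Longrightarrow> r \<le> 1 \<Longrightarrow> z \<in> ball 0 1 \<Longrightarrow> of_real r * z \<in> ball 0 1"
  using mult_left_le_one_le[of "norm z" r] by (simp flip: scaleR_conv_of_real)

lemma has_field_derivative_dilate:
  assumes "f holomorphic_on ball 0 1" "0 < r" "r \<le> 1" "z \<in> ball 0 1"
  shows "(dilate f r has_field_derivative deriv f (of_real r * z)) (at z)"
proof -
  have "(f has_field_derivative deriv f (of_real r * z)) (at (of_real r * z))"
    using assms of_real_mult_mem_ball[of r z]
    by (meson DERIV_deriv_iff_field_differentiable holomorphic_on_imp_differentiable_at open_ball less_imp_le)
  from DERIV_cdivide[OF DERIV_chain2[OF this DERIV_cmult_Id], of "of_real r"] show ?thesis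
    using assms(2) unfolding dilate_def by simp
qed

lemma holomorphic_on_dilate:
  "f holomorphic_on ball 0 1 \<Longrightarrow> 0 < r \<Longrightarrow> r \<le> 1 \<Longrightarrow> dilate f r holomorphic_on ball 0 1"
  using has_field_derivative_dilate holomorphic_on_open open_ball by blast

lemma dilate_in_classA: "f \<in> classA \<Longrightarrow> 0 < r \<Longrightarrow> r \<le> 1 \<Longrightarrow> dilate f r \<in> classA"
  using DERIV_imp_deriv[OF has_field_derivative_dilate[of f r 0]] holomorphic_on_dilate[of f r]
  by (auto simp: classA_def dilate_def)

lemma Qf_dilate:
  assumes "f holomorphic_on ball 0 1" "0 < r" "r \<le> 1" "z \<in> ball 0 1"
  shows "Qf (dilate f r) z = Qf f (of_real r * z)"
  using assms(2) DERIV_imp_deriv[OF has_field_derivative_dilate[OF assms]]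
  by (cases "z = 0") (auto simp: Qf_def dilate_def field_simps)

lemma dilate_1 [simp]: "dilate f 1 = f"
  by (simp add: dilate_def)

text \<open>Schwarz's lemma: a dilation by \<open>r\<close> only sees the values of \<open>\<phi>\<close> on \<open>ball 0 r\<close>.\<close>
lemma dilate_in_Sstar_if_image_subset:
  assumes f: "f \<in> Sstar \<phi>" and r: "0 < r" "r \<le> 1"
    and \<psi>: "\<psi> holomorphic_on ball 0 1" "inj_on \<psi> (ball 0 1)" "\<psi> 0 = 1"
    and sub: "\<phi> ` ball 0 r \<subseteq> \<psi> ` ball 0 1"
  shows "dilate f r \<in> Sstar \<psi>"
proof -
  have fA: "f \<in> classA" and hf: "f holomorphic_on ball 0 1" and hQ: "Qf f holomorphic_on ball 0 1"
    using f by (auto simp: Sstar_def classA_def subord_def)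
  obtain w where w: "w holomorphic_on ball 0 1" "w ` ball 0 1 \<subseteq> ball 0 1" "w 0 = 0"
    "\<And>z. z \<in> ball 0 1 \<Longrightarrow> Qf f z = \<phi> (w z)"
    using f unfolding Sstar_def subord_def by blast
  let ?g = "dilate f r"
  have "(\<lambda>z. Qf f (of_real r * z)) holomorphic_on ball 0 1"
    by (rule holomorphic_on_compose_gen[OF _ hQ, unfolded o_def])
       (auto intro!: holomorphic_intros of_real_mult_mem_ball simp: r less_imp_le)
  then have hQg: "Qf ?g holomorphic_on ball 0 1"
    by (rule holomorphic_transform) (simp add: Qf_dilate[OF hf r])
  have "Qf ?g z \<in> \<phi> ` ball 0 r" if z: "z \<in> ball 0 1" for z
  proof -
    have rz: "of_real r * z \<in> ball 0 1" by (rule of_real_mult_mem_ball) (use r z in auto)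
    have "norm (w (of_real r * z)) \<le> norm (of_real r * z)"
      using rz w(1-3) by (intro Schwarz_Lemma(1)) (auto simp: image_subset_iff)
    also have "\<dots> < r" using z r by (simp add: norm_mult)
    finally show ?thesis using Qf_dilate[OF hf r z] w(4)[OF rz] by simp
  qed
  then have "Qf ?g ` ball 0 1 \<subseteq> \<psi> ` ball 0 1" using sub by blast
  moreover have "Qf ?g 0 = \<psi> 0" using \<psi>(3) by (simp add: Qf_def)
  ultimately have "subord (Qf ?g) \<psi>" using subord_if_image_subset hQg \<psi>(1,2) by blast
  then show ?thesis using dilate_in_classA[OF fA r] by (simp add: Sstar_def)
qed

section \<open>The Janowski map\<close>

definition janowski_map :: "real \<Rightarrow> real \<Rightarrow> complex \<Rightarrow> complex" where
  "janowski_map A B = (\<lambda>z. (1 + of_real A * z) / (1 + of_real B * z))"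

lemma Janowski_eq_Sstar: "Janowski A B = Sstar (janowski_map A B)"
  unfolding Janowski_def janowski_map_def ..

lemma janowski_map_0 [simp]: "janowski_map A B 0 = 1"
  by (simp add: janowski_map_def)

lemma janowski_map_of_real:
  "1 + B * t \<noteq> 0 \<Longrightarrow> janowski_map A B (of_real t) = of_real ((1 + A * t) / (1 + B * t))"
  by (simp add: janowski_map_def)

lemma janowski_denom_nonzero:
  fixes z :: complex
  assumes "\<bar>B\<bar> * r \<le> 1" "norm z < r"
  shows "1 + of_real B * z \<noteq> 0"
proof
  assume "1 + of_real B * z = 0"
  then have "norm (of_real B * z) = 1" by (metis add_eq_0_iff norm_minus_cancel norm_one)
  moreover have "\<bar>B\<bar> * norm z < 1"
  proof (cases "B = 0")
    case False
    then have "\<bar>B\<bar> * norm z < \<bar>B\<bar> * r" using assms(2) by simp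
    with assms(1) show ?thesis by linarith
  qed simp
  ultimately show False by (simp add: norm_mult)
qed

lemma holomorphic_on_janowski_map:
  assumes "\<bar>B\<bar> * r \<le> 1"
  shows "janowski_map A B holomorphic_on ball 0 r"
proof -
  have "1 + of_real B * z \<noteq> 0" if "z \<in> ball 0 r" for z :: complex
    using janowski_denom_nonzero[OF assms] that by simp
  then show ?thesis unfolding janowski_map_def by (intro holomorphic_intros) auto
qed

lemma janowski_disc_ineq:
  fixes z :: complex
  assumes r: "0 < r" "\<bar>B\<bar> * r < 1" and z: "norm z < r"
  shows "norm (z + of_real (B*r^2)) < r * norm (1 + of_real B * z)"
proof -
  let ?Q = "1 - B^2*r^2"
  have Q: "0 < ?Q"
    using r abs_square_less_1[of "B*r"] by (simp add: abs_mult power_mult_distrib)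
  obtain x y where zz: "z = Complex x y" by (metis complex.exhaust)
  have "norm z ^ 2 < r ^ 2" using z by (intro power_strict_mono) auto
  then have "x^2 + y^2 < r^2" unfolding zz cmod_power2 by simp
  then have "(x^2 + y^2 - r^2) * ?Q < 0" using Q by (intro mult_neg_pos) auto
  moreover have "(x + B*r^2)^2 + y^2 - r^2 * ((1 + B*x)^2 + (B*y)^2) = (x^2 + y^2 - r^2) * ?Q"
    by (simp add: power2_eq_square algebra_simps)
  ultimately have "norm (z + of_real (B*r^2)) ^ 2 < (r * norm (1 + of_real B * z)) ^ 2"
    unfolding zz power_mult_distrib cmod_power2 by (simp add: power_mult_distrib)
  then show ?thesis by (rule power_less_imp_less_base) (use r in auto)
qed

lemma janowski_map_image_ball:
  assumes r: "0 < r" "\<bar>B\<bar> * r < 1" and AB: "B < A"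
  shows "janowski_map A B ` ball 0 r
    \<subseteq> ball (of_real ((1 - A*B*r^2) / (1 - B^2*r^2))) ((A - B) * r / (1 - B^2*r^2))"
proof clarify
  fix z :: complex assume "z \<in> ball 0 r"
  then have z: "norm z < r" by simp
  let ?Q = "1 - B^2*r^2" and ?d = "1 + of_real B * z"
  have d: "?d \<noteq> 0" using janowski_denom_nonzero[of B r z] r z by linarith
  have Q: "0 < ?Q"
    using r abs_square_less_1[of "B*r"] by (simp add: abs_mult power_mult_distrib)
  have eq: "janowski_map A B z - of_real ((1 - A*B*r^2) / ?Q)
      = of_real (A - B) * (z + of_real (B*r^2)) / (?d * of_real ?Q)"
  proof -
    have "of_real ?Q \<noteq> (0::complex)" using Q by (simp only: of_real_eq_0_iff)
    moreover have "(1 + of_real A * z) * of_real ?Q - of_real (1 - A*B*r^2) * ?d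
        = of_real (A - B) * (z + of_real (B*r^2))"
      by (simp add: algebra_simps power2_eq_square)
    ultimately show ?thesis
      using d unfolding janowski_map_def by (simp add: diff_frac_eq)
  qed
  have "norm (janowski_map A B z - of_real ((1 - A*B*r^2) / ?Q))
      = (A - B) * norm (z + of_real (B*r^2)) / (norm ?d * ?Q)"
    unfolding eq norm_divide norm_mult norm_of_real using AB Q by simp
  also have "\<dots> < (A - B) * (r * norm ?d) / (norm ?d * ?Q)"
    using janowski_disc_ineq[OF r z] AB Q d by (intro divide_strict_right_mono mult_strict_left_mono) auto
  also have "\<dots> = (A - B) * r / ?Q"
  proof -
    have "(A - B) * (r * n) / (n * q) = (A - B) * r / q" if "n \<noteq> 0" for n q :: real
      using that by (metis mult.commute mult.left_commute mult_divide_mult_cancel_left)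
    moreover have "norm ?d \<noteq> 0" using d by (simp only: norm_eq_zero not_False_eq_True)
    ultimately show ?thesis by blast
  qed
  finally have "dist (janowski_map A B z) (of_real ((1 - A*B*r^2) / ?Q)) < (A - B) * r / ?Q"
    by (simp only: dist_norm)
  then show "janowski_map A B z \<in> ball (of_real ((1 - A*B*r^2) / ?Q)) ((A - B) * r / ?Q)"
    by (simp add: dist_commute)
qed

section \<open>The \<open>SNe\<close>-radius of Janowski classes\<close>

lemma dilate_Janowski_in_SNe:
  assumes f: "f \<in> Janowski A B" and AB: "B < A" and r: "0 < r" "r \<le> 1"
    and rad: "r * (3 * (A - B) + 2 * \<bar>B\<bar>) \<le> 2"
  shows "dilate f r \<in> SNe"
proof -
  let ?b = "\<bar>B\<bar>" and ?Q = "1 - B^2*r^2"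
  define c where "c = (1 - A*B*r^2) / ?Q"
  define R where "R = (A - B) * r / ?Q"
  have ABr: "0 < (A - B) * r" using AB r by simp
  have rad': "3 * ((A - B) * r) + 2 * (?b * r) \<le> 2" using rad by (simp add: algebra_simps)
  then have br: "?b * r < 1" using ABr by linarith
  have Q: "?Q = (1 - ?b * r) * (1 + ?b * r)" by (simp add: power2_eq_square algebra_simps)
  have br0: "0 \<le> ?b * r" using r by simp
  then have Qpos: "0 < ?Q" unfolding Q using br by (intro mult_pos_pos) auto
  have "c - 1 = - (B * ((A - B) * r) * r) / ?Q"
    unfolding c_def using Qpos by (simp add: field_simps power2_eq_square)
  then have c1: "\<bar>c - 1\<bar> = ?b * r * ((A - B) * r) / ?Q"
    using ABr Qpos AB r by (simp add: abs_mult abs_divide)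
  have "?b * r * ((A - B) * r) < 1 * ((A - B) * r)" using br ABr by (rule mult_strict_right_mono)
  then have center: "\<bar>c - 1\<bar> < R" unfolding c1 R_def using Qpos by (simp add: divide_strict_right_mono)
  have "R + \<bar>c - 1\<bar> = (A - B) * r * (1 + ?b * r) / ((1 - ?b * r) * (1 + ?b * r))"
    unfolding c1 R_def Q[symmetric] add_divide_distrib[symmetric] by (simp add: algebra_simps)
  also have "\<dots> = (A - B) * r / (1 - ?b * r)" using br0 by simp
  also have "\<dots> \<le> 2/3" using rad' br by (subst pos_divide_le_eq) auto
  finally have "R \<le> 2/3 - \<bar>c - 1\<bar>" by simp
  with center have "ball (of_real c) R \<subseteq> phiNe ` ball 0 1" by (rule ball_subset_phiNe_image)
  moreover have "janowski_map A B ` ball 0 r \<subseteq> ball (of_real c) R"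
    unfolding c_def R_def using janowski_map_image_ball r(1) br AB .
  ultimately show ?thesis
    using f r holomorphic_on_phiNe inj_on_phiNe
    unfolding SNe_def Janowski_eq_Sstar
    by (intro dilate_in_Sstar_if_image_subset) auto
qed

lemma Janowski_subset_SNe:
  "B < A \<Longrightarrow> 3 * (A - B) + 2 * \<bar>B\<bar> \<le> 2 \<Longrightarrow> Janowski A B \<subseteq> SNe"
  using dilate_Janowski_in_SNe[of _ A B 1] by auto

text \<open>The extremal function \<open>z exp (\<integral>\<^sub>0\<^sup>z (A - B)/(1 + B t) dt)\<close>.\<close>
lemma Janowski_extremal:
  assumes B: "\<bar>B\<bar> \<le> 1"
  obtains f where "f \<in> Janowski A B" "\<And>z. z \<in> ball 0 1 \<Longrightarrow> Qf f z = janowski_map A B z"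
proof -
  define k where "k = (\<lambda>z::complex. of_real (A - B) / (1 + of_real B * z))"
  have nz: "1 + of_real B * z \<noteq> 0" if "z \<in> ball 0 1" for z :: complex
    using janowski_denom_nonzero[of B 1 z] B that by auto
  have "k holomorphic_on ball 0 1" unfolding k_def by (intro holomorphic_intros) (use nz in auto)
  then obtain H0 where H0: "\<And>x. x \<in> ball 0 1 \<Longrightarrow> (H0 has_field_derivative k x) (at x within ball 0 1)"
    using holomorphic_convex_primitive'[OF convex_ball open_ball] by metis
  define H where "H = (\<lambda>z. H0 z - H0 0)"
  have dH: "(H has_field_derivative k x) (at x)" if "x \<in> ball 0 1" for x
    using DERIV_diff[OF H0[OF that] DERIV_const[of "H0 0"]] that
    by (simp add: H_def at_within_open[of x "ball 0 1"])
  define f where "f = (\<lambda>z. z * exp (H z))"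
  have df: "(f has_field_derivative exp (H z) + z * (exp (H z) * k z)) (at z)" if "z \<in> ball 0 1" for z
    using DERIV_mult[OF DERIV_ident DERIV_fun_exp[OF dH[OF that]]] unfolding f_def
    by (simp add: algebra_simps)
  have hf: "f holomorphic_on ball 0 1" using df holomorphic_on_open open_ball by blast
  have Qeq: "Qf f z = janowski_map A B z" if z: "z \<in> ball 0 1" for z
  proof (cases "z = 0")
    case False
    have "Qf f z = 1 + z * k z"
      using False DERIV_imp_deriv[OF df[OF z]] unfolding Qf_def f_def by (simp add: field_simps)
    also have "\<dots> = janowski_map A B z"
      using nz[OF z] unfolding k_def janowski_map_def by (simp add: field_simps)
    finally show ?thesis .
  qed (simp add: Qf_def)
  have "f \<in> classA"
    using hf DERIV_imp_deriv[OF df[of 0]] by (simp add: classA_def f_def H_def)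
  moreover have "subord (Qf f) (janowski_map A B)"
    unfolding subord_def using holomorphic_on_janowski_map[of B 1 A] B Qeq
    by (intro conjI exI[of _ id]) (auto intro: holomorphic_transform)
  ultimately show ?thesis using that Qeq by (simp add: Janowski_eq_Sstar Sstar_def)
qed

lemma dilate_notin_SNe:
  assumes f: "f \<in> classA" "\<And>z. z \<in> ball 0 1 \<Longrightarrow> Qf f z = \<phi> z"
    and r: "0 < r" "r \<le> 1" and t: "\<bar>t\<bar> < r"
    and v: "\<phi> (of_real t) = of_real v" "v \<le> 1/3 \<or> 5/3 \<le> v"
  shows "dilate f r \<notin> SNe"
proof
  assume "dilate f r \<in> SNe"
  then obtain w where w: "w ` ball 0 1 \<subseteq> ball 0 1"
    "\<And>z. z \<in> ball 0 1 \<Longrightarrow> Qf (dilate f r) z = phiNe (w z)"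
    unfolding SNe_def Sstar_def subord_def by blast
  define z0 where "z0 = complex_of_real (t / r)"
  have z0: "z0 \<in> ball 0 1" using t r by (simp add: z0_def norm_divide)
  have "of_real r * z0 = of_real t" using r by (simp add: z0_def)
  moreover have "of_real t \<in> ball (0::complex) 1" using t r by simp
  ultimately have "Qf (dilate f r) z0 = of_real v"
    using Qf_dilate[of f r z0] f r z0 v(1) by (simp add: classA_def)
  then have "phiNe (w z0) = of_real v" using w(2)[OF z0] by simp
  moreover have "w z0 \<in> ball 0 1" using w(1) z0 by blast
  ultimately show False using real_phiNe_bounds[of "w z0"] v(2) by auto
qed

lemma SNe_radius_eqI:
  assumes "0 < \<rho>"
    and "\<And>f r. f \<in> G \<Longrightarrow> 0 < r \<Longrightarrow> r \<le> min 1 \<rho> \<Longrightarrow> dilate f r \<in> SNe"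
    and "\<And>r. \<rho> < r \<Longrightarrow> r \<le> 1 \<Longrightarrow> \<exists>f\<in>G. dilate f r \<notin> SNe"
  shows "SNe_radius G = min 1 \<rho>"
  unfolding SNe_radius_def
proof (rule Greatest_equality)
  fix y assume y: "0 < y \<and> y \<le> 1 \<and> (\<forall>f\<in>G. \<forall>r. 0 < r \<and> r \<le> y \<longrightarrow> dilate f r \<in> SNe)"
  show "y \<le> min 1 \<rho>"
  proof (rule ccontr)
    assume "\<not> y \<le> min 1 \<rho>"
    then obtain f where "f \<in> G" "dilate f y \<notin> SNe" using assms(3)[of y] y by auto
    then show False using y by auto
  qed
qed (use assms in auto)

lemma janowski_real_value_outside:
  fixes A B \<rho> :: real
  assumes AB: "B < A" and \<rho>: "0 < \<rho>" "\<rho> * (3 * (A - B) + 2 * \<bar>B\<bar>) = 2"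
  obtains t where "\<bar>t\<bar> = \<rho>" "1 + B * t \<noteq> 0" "(1 + A * t) / (1 + B * t) \<in> {1/3, 5/3}"
proof (cases "0 \<le> B")
  case True
  with \<rho> have "3 * (A * \<rho>) - B * \<rho> = 2" by (simp add: algebra_simps)
  moreover from this have "B * \<rho> < 1" using mult_strict_right_mono[OF AB \<rho>(1)] by linarith
  ultimately show ?thesis using that[of "-\<rho>"] \<rho>(1) by (simp add: field_simps)
next
  case False
  with \<rho> have "3 * (A * \<rho>) - 5 * (B * \<rho>) = 2" by (simp add: algebra_simps)
  moreover from this have "- (B * \<rho>) < 1" using mult_strict_right_mono[OF AB \<rho>(1)] by linarith
  ultimately show ?thesis using that[of \<rho>] \<rho>(1) by (simp add: field_simps)
qed

lemma SNe_radius_Janowski: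
  assumes B: "\<bar>B\<bar> \<le> 1" and AB: "B < A"
  shows "SNe_radius (Janowski A B) = min 1 (2 / (3 * (A - B) + 2 * \<bar>B\<bar>))"
proof (rule SNe_radius_eqI)
  define d where "d = 3 * (A - B) + 2 * \<bar>B\<bar>"
  have d: "0 < d" using AB by (simp add: d_def)
  then show "0 < 2 / (3 * (A - B) + 2 * \<bar>B\<bar>)" by (simp add: d_def)
  show "dilate f r \<in> SNe" if "f \<in> Janowski A B" "0 < r" "r \<le> min 1 (2 / (3 * (A - B) + 2 * \<bar>B\<bar>))"
    for f r
    using that d dilate_Janowski_in_SNe[OF that(1) AB] by (simp add: d_def pos_le_divide_eq)
  show "\<exists>f\<in>Janowski A B. dilate f r \<notin> SNe" if r: "2 / (3 * (A - B) + 2 * \<bar>B\<bar>) < r" "r \<le> 1" for r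
  proof -
    obtain f where f: "f \<in> Janowski A B" "\<And>z. z \<in> ball 0 1 \<Longrightarrow> Qf f z = janowski_map A B z"
      using Janowski_extremal[OF B] by blast
    have "2 / d * d = 2" using d by simp
    then obtain t where t: "\<bar>t\<bar> = 2 / d" "1 + B * t \<noteq> 0" "(1 + A * t) / (1 + B * t) \<in> {1/3, 5/3}"
      using janowski_real_value_outside[OF AB, of "2 / d"] d by (auto simp: d_def)
    have "dilate f r \<notin> SNe"
    proof (rule dilate_notin_SNe[OF _ f(2)])
      show "f \<in> classA" using f(1) by (simp add: Janowski_def Sstar_def)
      show "janowski_map A B (of_real t) = of_real ((1 + A * t) / (1 + B * t))"
        using t(2) by (rule janowski_map_of_real)
    qed (use r t d in \<open>auto simp: d_def\<close>)
    with f(1) show ?thesis by blast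
  qed
qed

theorem mainTheorem2:
  shows "(\<forall>A B::real. 0 \<le> B \<and> B < A \<and> A \<le> 1 \<longrightarrow>
            SNe_radius (Janowski A B) = min 1 (2 / (3 * A - B)) \<and>
            (1 - B \<le> 3 * (1 - A) \<longrightarrow> Janowski A B \<subseteq> SNe))
       \<and> (\<forall>A B::real. -1 \<le> B \<and> B < A \<and> A \<le> 1 \<and> B \<le> 0 \<longrightarrow>
            SNe_radius (Janowski A B) = min 1 (2 / (3 * A - 5 * B)) \<and>
            (3 * (1 + A) \<le> 5 * (1 + B) \<longrightarrow> Janowski A B \<subseteq> SNe))"
proof (intro conjI allI impI)
  fix A B :: real
  assume "0 \<le> B \<and> B < A \<and> A \<le> 1"
  then have B: "\<bar>B\<bar> \<le> 1" "B < A" and d: "3 * (A - B) + 2 * \<bar>B\<bar> = 3 * A - B" by auto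
  show "SNe_radius (Janowski A B) = min 1 (2 / (3 * A - B))"
    using SNe_radius_Janowski[OF B] by (simp only: d)
  show "Janowski A B \<subseteq> SNe" if "1 - B \<le> 3 * (1 - A)"
    using Janowski_subset_SNe[OF B(2)] d that by simp
next
  fix A B :: real
  assume "-1 \<le> B \<and> B < A \<and> A \<le> 1 \<and> B \<le> 0"
  then have B: "\<bar>B\<bar> \<le> 1" "B < A" and d: "3 * (A - B) + 2 * \<bar>B\<bar> = 3 * A - 5 * B" by auto
  show "SNe_radius (Janowski A B) = min 1 (2 / (3 * A - 5 * B))"
    using SNe_radius_Janowski[OF B] by (simp only: d)
  show "Janowski A B \<subseteq> SNe" if "3 * (1 + A) \<le> 5 * (1 + B)"
    using Janowski_subset_SNe[OF B(2)] d that by simp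
qed

end
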